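(* Let $A$ be a VPA with $\emptyset\subsetneq\mathcal L(A)\subsetneq\Sigma^*$ and assume $S_0$ is bounded. For each $\tau\in Q^Q$ let $R_\tau$ be a bounded overapproximation of $\tau^{-1}S_1$, and let $\mathrm{RegFlat}=R_0(\Sigma_c\cup R_1)^*$ where $R_1=\bigcup_{\tau\in Q^Q}\tau R_\tau$ and $R_0=\bigcup_{\tau\in Q^Q}\mathsf{Suf}(R_\tau)$. Then $\nu_f(\mathrm{Flat})=\nu_f(\mathrm{RegFlat})=\mathrm{Rep}$.
   Context: VPA $A=(Q,\Sigma,\Gamma,\bot,q_0,\delta,F)$ over a pushdown alphabet $\Sigma=\Sigma_c\cup\Sigma_r\cup\Sigma_{\mathit{int}}$ ($\Sigma_c,\Sigma_r\ne\emptyset$), with configurations $\alpha q$ ($\alpha\in\bot(\Gamma\setminus\{\bot\})^*$), call letters pushing via $\delta_c:Q\times\Sigma_c\to(\Gamma\setminus\{\bot\})\times Q$, internal letters via $\delta_{\mathit{int}}:Q\times\Sigma_{\mathit{int}}\to Q$, return letters popping the top $\gamma\ne\bot$ via $\delta_r:Q\times\Sigma_r\times\Gamma\to Q$ (or reading $\bot$ without popping). $\delta(c,w)$ is the configuration reached; $\mathcal L(c)$ the words leading from $c$ to a state in $F$. $W$: well-matched words (smallest set containing $\varepsilon$, $\Sigma_{\mathit{int}}$, closed under concatenation and $w\mapsto awb$, $a\in\Sigma_c$, $b\in\Sigma_r$); $D$: descending words (products of well-matched words and return letters); $\varphi:W\to Q^Q$ with $\delta(\alpha p,w)=\alpha\varphi(w)(p)$.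 $\mathrm{rConf}$: configurations reachable from $\bot q_0$; $\mathsf{rep}(c)$: length-lexicographically least (for fixed linear orders on $\Gamma,Q$) $c'\in\mathrm{rConf}$ with $\mathcal L(c')=\mathcal L(c)$; $\mathrm{Rep}=\mathsf{rep}(\mathrm{rConf})$; $\nu_A(w)=\mathsf{rep}(\delta(\bot q_0,w))$. For $w=a_1\cdots a_n\in D$, $\nu_A(a_i\cdots a_n)=\bot q_i$; $\sigma_0(w)=q_1\cdots q_n$; for nonempty $w\in W$, $\sigma_1(w)=\varphi(w)q_2\cdots q_n$. $S_0=\sigma_0(D)$, $S_1=\sigma_1(W\setminus\{\varepsilon\})$. $\Sigma_f=\Sigma_c\cup Q\cup Q^Q$ (disjoint); $\mathrm{AllFlat}=Q^*(\Sigma_c\cup Q^QQ^* )^*$ with unique factorization $s_0s_1\cdots s_m$, $s_0\in Q^*$, $s_i\in\Sigma_c\cup Q^QQ^*$. $t_f$: $t_f(\varepsilon)=\bot q_0$, $t_f(q_1\cdots q_n)=\bot q_1$ ($n\ge1$), $t_f(s_0\cdots s_m)=\delta(t_f(s_0\cdots s_{m-1}),s_m)$ if $s_m\in\Sigma_c$, and $=\alpha\tau(q)$ if $s_m=\tau q_2\cdots q_k$ and $t_f(s_0\cdots s_{m-1})=\alpha q$. $\nu_f=\mathsf{rep}\circ t_f$. $\mathrm{Flat}=S_0(\Sigma_c\cup S_1)^*$. A language $K$ is bounded if $K\subseteq w_1^*\cdots w_k^*$. For $\tau\in Q^Q$, $\tau^{-1}S_1=\{x:\tau x\in S_1\}$.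 $\Psi(a_1\cdots a_n)=\{(a_i,n-i+1):1\le i\le n\}$ and $\Psi(K)=\bigcup_{w\in K}\Psi(w)$. A bounded overapproximation of a bounded context-free language $K$ is a bounded regular language $R\supseteq K$ with $\{|w|:w\in K\}=\{|w|:w\in R\}$ and $\Psi(K)=\Psi(R)$. $\mathsf{Suf}(L)$ is the set of all suffixes of words in $L$. *)

theory Defs
  imports Main
begin

(* Visibly pushdown automata.  States 'q, input letters 'a, stack symbols 'g.
   The input alphabet Sigma is the (finite) type 'a, partitioned into call,
   return and internal letters. *)
record ('q, 'a, 'g) vpa =
  sig_c :: "'a set"
  sig_r :: "'a set"
  sig_i :: "'a set"
  vbot  :: 'g
  q0    :: 'q
  dcall :: "'q \<Rightarrow> 'a \<Rightarrow> 'g \<times> 'q"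
  dint  :: "'q \<Rightarrow> 'a \<Rightarrow> 'q"
  dret  :: "'q \<Rightarrow> 'a \<Rightarrow> 'g \<Rightarrow> 'q"
  fin   :: "'q set"

definition wf_vpa :: "('q, 'a, 'g) vpa \<Rightarrow> bool" where
  "wf_vpa A \<longleftrightarrow>
     sig_c A \<union> sig_r A \<union> sig_i A = UNIV \<and>
     sig_c A \<inter> sig_r A = {} \<and> sig_c A \<inter> sig_i A = {} \<and> sig_r A \<inter> sig_i A = {} \<and>
     sig_c A \<noteq> {} \<and> sig_r A \<noteq> {} \<and>
     (\<forall>q a. a \<in> sig_c A \<longrightarrow> fst (dcall A q a) \<noteq> vbot A)"

(* A configuration alpha q: the stack alpha is a list whose first element is
   the bottom symbol and whose last element is the top of the stack. *)
type_synonym ('g, 'q) conf = "'g list \<times> 'q"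

definition dstep :: "('q, 'a, 'g) vpa \<Rightarrow> ('g, 'q) conf \<Rightarrow> 'a \<Rightarrow> ('g, 'q) conf" where
  "dstep A c a =
     (let al = fst c; q = snd c in
      if a \<in> sig_c A then (al @ [fst (dcall A q a)], snd (dcall A q a))
      else if a \<in> sig_i A then (al, dint A q a)
      else if last al = vbot A then (al, dret A q a (vbot A))
      else (butlast al, dret A q a (last al)))"

definition delta :: "('q, 'a, 'g) vpa \<Rightarrow> ('g, 'q) conf \<Rightarrow> 'a list \<Rightarrow> ('g, 'q) conf" where
  "delta A c w = foldl (dstep A) c w"

definition init_conf :: "('q, 'a, 'g) vpa \<Rightarrow> ('g, 'q) conf" where
  "init_conf A = ([vbot A], q0 A)"

definition lang :: "('q, 'a, 'g) vpa \<Rightarrow> ('g, 'q) conf \<Rightarrow> 'a list set" where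
  "lang A c = {w. snd (delta A c w) \<in> fin A}"

definition rConf :: "('q, 'a, 'g) vpa \<Rightarrow> ('g, 'q) conf set" where
  "rConf A = {delta A (init_conf A) w | w. True}"

definition conf_less :: "('g::linorder, 'q::linorder) conf \<Rightarrow> ('g, 'q) conf \<Rightarrow> bool" where
  "conf_less c d \<longleftrightarrow>
     length (fst c) < length (fst d) \<or>
     (length (fst c) = length (fst d) \<and>
       ((fst c, fst d) \<in> lexord {(x, y). x < y} \<or> (fst c = fst d \<and> snd c < snd d)))"

definition rep :: "('q::linorder, 'a, 'g::linorder) vpa \<Rightarrow> ('g, 'q) conf \<Rightarrow> ('g, 'q) conf" where
  "rep A c = (THE c'. c' \<in> rConf A \<and> lang A c' = lang A c \<and>
                 (\<forall>d \<in> rConf A. lang A d = lang A c \<longrightarrow> d = c' \<or> conf_less c' d))"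

definition Rep :: "('q::linorder, 'a, 'g::linorder) vpa \<Rightarrow> ('g, 'q) conf set" where
  "Rep A = rep A ` rConf A"

definition nuA :: "('q::linorder, 'a, 'g::linorder) vpa \<Rightarrow> 'a list \<Rightarrow> ('g, 'q) conf" where
  "nuA A w = rep A (delta A (init_conf A) w)"

inductive_set WM :: "('q, 'a, 'g) vpa \<Rightarrow> 'a list set" for A where
  wm_eps: "[] \<in> WM A"
| wm_int: "a \<in> sig_i A \<Longrightarrow> [a] \<in> WM A"
| wm_cat: "u \<in> WM A \<Longrightarrow> v \<in> WM A \<Longrightarrow> u @ v \<in> WM A"
| wm_nest: "a \<in> sig_c A \<Longrightarrow> w \<in> WM A \<Longrightarrow> b \<in> sig_r A \<Longrightarrow> a # w @ [b] \<in> WM A"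

inductive_set DW :: "('q, 'a, 'g) vpa \<Rightarrow> 'a list set" for A where
  dw_eps: "[] \<in> DW A"
| dw_wm: "w \<in> WM A \<Longrightarrow> u \<in> DW A \<Longrightarrow> w @ u \<in> DW A"
| dw_ret: "b \<in> sig_r A \<Longrightarrow> u \<in> DW A \<Longrightarrow> b # u \<in> DW A"

definition phi :: "('q, 'a, 'g) vpa \<Rightarrow> 'a list \<Rightarrow> 'q \<Rightarrow> 'q" where
  "phi A w = (\<lambda>p. snd (delta A ([vbot A], p) w))"

datatype ('a, 'q) fsym = FC 'a | FQ 'q | FT "'q \<Rightarrow> 'q"

fun is_FQ :: "('a, 'q) fsym \<Rightarrow> bool" where
  "is_FQ (FQ _) = True"
| "is_FQ _ = False"

definition sigma0 :: "('q::linorder, 'a, 'g::linorder) vpa \<Rightarrow> 'a list \<Rightarrow> ('a, 'q) fsym list" where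
  "sigma0 A w = map (\<lambda>i. FQ (snd (nuA A (drop i w)))) [0..<length w]"

definition sigma1 :: "('q::linorder, 'a, 'g::linorder) vpa \<Rightarrow> 'a list \<Rightarrow> ('a, 'q) fsym list" where
  "sigma1 A w = FT (phi A w) # map (\<lambda>i. FQ (snd (nuA A (drop i w)))) [1..<length w]"

definition S0 :: "('q::linorder, 'a, 'g::linorder) vpa \<Rightarrow> ('a, 'q) fsym list set" where
  "S0 A = sigma0 A ` DW A"

definition S1 :: "('q::linorder, 'a, 'g::linorder) vpa \<Rightarrow> ('a, 'q) fsym list set" where
  "S1 A = sigma1 A ` (WM A - {[]})"

fun tf_step :: "('q, 'a, 'g) vpa \<Rightarrow> ('g, 'q) conf \<Rightarrow> ('a, 'q) fsym \<Rightarrow> ('g, 'q) conf" where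
  "tf_step A c (FC a) = dstep A c a"
| "tf_step A c (FT \<tau>) = (fst c, \<tau> (snd c))"
| "tf_step A c (FQ _) = c"

definition tf_start :: "('q, 'a, 'g) vpa \<Rightarrow> ('a, 'q) fsym list \<Rightarrow> ('g, 'q) conf" where
  "tf_start A w = (case w of FQ q # _ \<Rightarrow> ([vbot A], q) | _ \<Rightarrow> ([vbot A], q0 A))"

definition tf :: "('q, 'a, 'g) vpa \<Rightarrow> ('a, 'q) fsym list \<Rightarrow> ('g, 'q) conf" where
  "tf A w = foldl (tf_step A) (tf_start A w) (dropWhile is_FQ w)"

definition nu_f :: "('q::linorder, 'a, 'g::linorder) vpa \<Rightarrow> ('a, 'q) fsym list \<Rightarrow> ('g, 'q) conf" where
  "nu_f A w = rep A (tf A w)"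

definition conc :: "'b list set \<Rightarrow> 'b list set \<Rightarrow> 'b list set" where
  "conc K L = {u @ v | u v. u \<in> K \<and> v \<in> L}"

definition kstar :: "'b list set \<Rightarrow> 'b list set" where
  "kstar K = {concat ws | ws. set ws \<subseteq> K}"

definition Suf :: "'b list set \<Rightarrow> 'b list set" where
  "Suf L = {v. \<exists>u. u @ v \<in> L}"

definition Flat :: "('q::linorder, 'a, 'g::linorder) vpa \<Rightarrow> ('a, 'q) fsym list set" where
  "Flat A = conc (S0 A) (kstar ({[FC a] | a. a \<in> sig_c A} \<union> S1 A))"

definition RegFlat :: "('q, 'a, 'g) vpa \<Rightarrow> (('q \<Rightarrow> 'q) \<Rightarrow> ('a, 'q) fsym list set)
                        \<Rightarrow> ('a, 'q) fsym list set" where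
  "RegFlat A R =
     (let R1 = (\<Union>\<tau>. (\<lambda>x. FT \<tau> # x) ` R \<tau>);
          R0 = (\<Union>\<tau>. Suf (R \<tau>))
      in conc R0 (kstar ({[FC a] | a. a \<in> sig_c A} \<union> R1)))"

definition bounded :: "'b list set \<Rightarrow> bool" where
  "bounded K \<longleftrightarrow> (\<exists>ws :: 'b list list. \<forall>u \<in> K. \<exists>ns :: nat list.
       length ns = length ws \<and> u = concat (map2 (\<lambda>w n. concat (replicate n w)) ws ns))"

definition regular :: "'b list set \<Rightarrow> bool" where
  "regular L \<longleftrightarrow> (\<exists>(N :: nat) (d :: nat \<Rightarrow> 'b \<Rightarrow> nat) (s :: nat) (F :: nat set).
       s < N \<and> (\<forall>q < N. \<forall>x. d q x < N) \<and> L = {w. foldl d s w \<in> F})"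

definition Psi :: "'b list \<Rightarrow> ('b \<times> nat) set" where
  "Psi w = {(w ! i, length w - i) | i. i < length w}"

definition Psi_set :: "'b list set \<Rightarrow> ('b \<times> nat) set" where
  "Psi_set K = (\<Union>w \<in> K. Psi w)"

definition bounded_overapprox :: "'b list set \<Rightarrow> 'b list set \<Rightarrow> bool" where
  "bounded_overapprox K R \<longleftrightarrow>
     bounded R \<and> regular R \<and> K \<subseteq> R \<and> length ` K = length ` R \<and> Psi_set K = Psi_set R"

end

theory Submission
  imports Defs "HOL-Library.List_Lexorder" "HOL-Library.Product_Lexorder"
begin

(* A descending word leaves only the bottom symbol on the stack, and the length-lexicographically
   least representative of such a configuration again has stack bottom alone; so the letter q_i
   that sigma0 and sigma1 record is a faithful stand-in for the configuration reached on a suffix,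
   and t_f can restart from it.  Every input word splits into a descending word followed by call
   letters and nonempty well-matched words; t_f replays a call letter verbatim and a well-matched
   word w through phi(w), which gives Rep <= nu_f(Flat).  Flat <= RegFlat because S1 <= R1 and
   every sigma0(u) is a suffix of some sigma1(v): prefix u by pending calls and a nonempty
   well-matched word.  Conversely, equality of the Psi-images forces every word of R_tau to consist
   of such recorded states, and equality of the length sets forces tau = phi(v) for a well-matched v
   whenever R_tau is nonempty; hence each word of RegFlat is still replayed by some input word from
   a reachable configuration, i.e. nu_f(RegFlat) <= Rep. *)

subsection \<open>Runs of the automaton\<close>

lemma delta_Nil [simp]: "delta A c [] = c"
  by (simp add: delta_def)

lemma delta_Cons: "delta A c (a # u) = delta A (dstep A c a) u"
  by (simp add: delta_def)

lemma delta_append: "delta A c (u @ v) = delta A (delta A c u) v"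
  by (simp add: delta_def)

lemma lang_delta: "lang A (delta A c u) = {x. u @ x \<in> lang A c}"
  by (auto simp: lang_def delta_append)

lemma init_conf_in_rConf: "init_conf A \<in> rConf A"
  unfolding rConf_def by (auto intro: exI[of _ "[]"])

lemma delta_in_rConf: "c \<in> rConf A \<Longrightarrow> delta A c u \<in> rConf A"
  unfolding rConf_def by (auto simp: delta_append[symmetric])

lemma dstep_call:
  "a \<in> sig_c A \<Longrightarrow> dstep A (al, q) a = (al @ [fst (dcall A q a)], snd (dcall A q a))"
  by (simp add: dstep_def)

lemma dstep_int: "wf_vpa A \<Longrightarrow> a \<in> sig_i A \<Longrightarrow> dstep A (al, q) a = (al, dint A q a)"
  by (auto simp: dstep_def wf_vpa_def)

lemma dstep_ret:
  "wf_vpa A \<Longrightarrow> b \<in> sig_r A \<Longrightarrow> dstep A (al, q) b =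
     (if last al = vbot A then (al, dret A q b (vbot A)) else (butlast al, dret A q b (last al)))"
  by (auto simp: dstep_def wf_vpa_def)

lemma wf_vpa_letter_cases: "wf_vpa A \<Longrightarrow> a \<in> sig_c A \<or> a \<in> sig_i A \<or> a \<in> sig_r A"
  unfolding wf_vpa_def by (metis UNIV_I Un_iff)

lemma wf_vpa_nonempty: "wf_vpa A \<Longrightarrow> sig_c A \<noteq> {} \<and> sig_r A \<noteq> {}"
  by (simp add: wf_vpa_def)

lemma delta_keeps_bottom: "fst c = vbot A # al \<Longrightarrow> \<exists>al'. fst (delta A c w) = vbot A # al'"
proof (induction w arbitrary: c al)
  case (Cons a w)
  have "\<exists>al'. fst (dstep A c a) = vbot A # al'"
    using Cons.prems by (cases al rule: rev_cases) (auto simp: dstep_def Let_def)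
  then show ?case using Cons.IH by (metis delta_Cons)
qed simp

lemma rConf_bottom: "c \<in> rConf A \<Longrightarrow> \<exists>al. fst c = vbot A # al"
  unfolding rConf_def init_conf_def using delta_keeps_bottom[of "([vbot A], q0 A)"] by auto

subsection \<open>Well-matched and descending words\<close>

lemma WM_delta_stack_invariant:
  assumes wf: "wf_vpa A" and "v \<in> WM A"
  shows "\<exists>f. \<forall>al p. delta A (al, p) v = (al, f p)"
  using assms(2)
proof induction
  case wm_eps
  show ?case by (intro exI[of _ id]) simp
next
  case (wm_int a)
  show ?case
    by (intro exI[of _ "\<lambda>p. dint A p a"]) (simp add: delta_Cons dstep_int[OF wf wm_int])
next
  case (wm_cat u v)
  then obtain f g where "\<And>al p. delta A (al, p) u = (al, f p)" "\<And>al p. delta A (al, p) v = (al, g p)"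
    by blast
  then show ?case by (intro exI[of _ "g \<circ> f"]) (simp add: delta_append)
next
  case (wm_nest a w b)
  then obtain f where f: "\<And>al p. delta A (al, p) w = (al, f p)" by blast
  have "fst (dcall A p a) \<noteq> vbot A" for p using wf wm_nest(1) by (simp add: wf_vpa_def)
  then show ?case
    using f by (intro exI[of _ "\<lambda>p. dret A (f (snd (dcall A p a))) b (fst (dcall A p a))"])
      (simp add: delta_Cons delta_append dstep_call[OF wm_nest(1)] dstep_ret[OF wf wm_nest(3)])
qed

lemma delta_WM: "wf_vpa A \<Longrightarrow> v \<in> WM A \<Longrightarrow> delta A (al, p) v = (al, phi A v p)"
  using WM_delta_stack_invariant by (fastforce simp: phi_def)

lemma concat_WM: "\<forall>v\<in>set vs. v \<in> WM A \<Longrightarrow> concat vs \<in> WM A"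
  by (induction vs) (auto intro: WM.intros)

lemma WM_imp_DW: "v \<in> WM A \<Longrightarrow> v \<in> DW A"
  using dw_wm[OF _ dw_eps] by fastforce

lemma DW_append: "u \<in> DW A \<Longrightarrow> v \<in> DW A \<Longrightarrow> u @ v \<in> DW A"
  by (induction rule: DW.induct) (auto intro: DW.intros)

lemma drop_WM_in_DW: "v \<in> WM A \<Longrightarrow> drop i v \<in> DW A"
proof (induction arbitrary: i rule: WM.induct)
  case wm_eps
  then show ?case by (simp add: dw_eps)
next
  case (wm_int a)
  then show ?case by (cases i) (auto intro: WM_imp_DW WM.intros dw_eps)
next
  case (wm_cat u v)
  then show ?case by (simp add: DW_append)
next
  case (wm_nest a w b)
  show ?case
  proof (cases i)
    case 0
    then show ?thesis using wm_nest by (auto intro: WM_imp_DW WM.intros)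
  next
    case (Suc j)
    have "drop (j - length w) [b] \<in> DW A"
      using wm_nest(3) by (cases "j - length w") (auto intro: DW.intros)
    then show ?thesis using Suc DW_append[OF wm_nest.IH[of j]] by simp
  qed
qed

lemma delta_DW_stack:
  assumes "wf_vpa A" and "u \<in> DW A"
  shows "fst (delta A ([vbot A], p) u) = [vbot A]"
  using assms(2) by (induction arbitrary: p)
    (simp_all add: assms(1) delta_append delta_WM delta_Cons dstep_ret)

lemma DW_call_prefix_WM:
  assumes a: "a \<in> sig_c A" and "u \<in> DW A"
  shows "\<exists>k. \<forall>y\<in>WM A. replicate k a @ y @ u \<in> WM A"
  using assms(2)
proof induction
  case dw_eps
  show ?case by (auto intro: exI[of _ 0])
next
  case (dw_wm w u)
  then obtain k where k: "\<forall>y\<in>WM A. replicate k a @ y @ u \<in> WM A" by blast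
  have "replicate k a @ y @ w @ u \<in> WM A" if "y \<in> WM A" for y
    using k wm_cat[OF that dw_wm(1)] by force
  then show ?case by blast
next
  case (dw_ret b u)
  then obtain k where k: "\<forall>y\<in>WM A. replicate k a @ y @ u \<in> WM A" by blast
  have "replicate (Suc k) a @ y @ b # u \<in> WM A" if "y \<in> WM A" for y
    using k[rule_format, OF wm_nest[OF a that dw_ret(1)]] by (simp add: replicate_app_Cons_same)
  then show ?case by blast
qed

lemma word_decomposition:
  assumes wf: "wf_vpa A"
  shows "\<exists>u0 ps. w = u0 @ concat ps \<and> u0 \<in> DW A \<and>
           (\<forall>p\<in>set ps. (\<exists>a\<in>sig_c A. p = [a]) \<or> (p \<in> WM A \<and> p \<noteq> []))"
proof (induction w rule: rev_induct)
  case Nil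
  then show ?case by (auto intro: dw_eps intro!: exI[of _ "[]"])
next
  case (snoc x w)
  let ?call = "\<lambda>p. \<exists>a\<in>sig_c A. p = [a]"
  from snoc obtain u0 ps where w: "w = u0 @ concat ps" "u0 \<in> DW A"
    and ps: "\<forall>p\<in>set ps. ?call p \<or> (p \<in> WM A \<and> p \<noteq> [])" by blast
  from wf_vpa_letter_cases[OF wf, of x] consider "x \<in> sig_c A" | "x \<in> sig_i A" | "x \<in> sig_r A" "\<exists>p\<in>set ps. ?call p"
    | "x \<in> sig_r A" "\<forall>p\<in>set ps. \<not> ?call p"
    by blast
  then show ?case
  proof cases
    case 1
    then show ?thesis using w ps by (intro exI[of _ u0] exI[of _ "ps @ [[x]]"]) auto
  next
    case 2
    then show ?thesis using w ps wm_int[OF 2] by (intro exI[of _ u0] exI[of _ "ps @ [[x]]"]) auto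
  next
    case 3
    \<comment> \<open>the return letter closes the last pending call\<close>
    then obtain ys a zs where s: "ps = ys @ [a] # zs" "a \<in> sig_c A" "\<forall>z\<in>set zs. \<not> ?call z"
      using split_list_last_prop[of ps ?call] by blast
    then have "concat zs \<in> WM A" using ps by (intro concat_WM) auto
    then have "a # concat zs @ [x] \<in> WM A" using s(2) 3 by (intro wm_nest)
    then show ?thesis using w ps s
      by (intro exI[of _ u0] exI[of _ "ys @ [a # concat zs @ [x]]"]) auto
  next
    case 4
    then have "concat ps \<in> WM A" using ps by (intro concat_WM) auto
    then have "u0 @ concat ps @ [x] \<in> DW A"
      using w(2) 4 by (intro DW_append[OF w(2)] DW_append WM_imp_DW dw_ret dw_eps)
    then show ?thesis using w by (intro exI[of _ "u0 @ concat ps @ [x]"] exI[of _ "[]"]) auto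
  qed
qed

subsection \<open>Representatives\<close>

definition conf_key :: "('g, 'q) conf \<Rightarrow> nat \<times> 'g list \<times> 'q" where
  "conf_key c = (length (fst c), fst c, snd c)"

lemma conf_less_iff_key: "conf_less c d \<longleftrightarrow> conf_key c < conf_key d"
  by (auto simp: conf_less_def conf_key_def less_prod_def' list_less_def)

lemma conf_key_eq_iff: "conf_key c = conf_key d \<longleftrightarrow> c = d"
  by (auto simp: conf_key_def prod_eq_iff)

lemma conf_less_asym: "conf_less c d \<Longrightarrow> \<not> conf_less d c"
  by (simp add: conf_less_iff_key)

lemma exists_conf_less_least:
  fixes C :: "('g::{finite,linorder}, 'q::{finite,linorder}) conf set"
  assumes "C \<noteq> {}"
  shows "\<exists>c\<in>C. \<forall>d\<in>C. d = c \<or> conf_less c d"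
proof -
  define l where "l = (LEAST n. \<exists>d\<in>C. length (fst d) = n)"
  have l_le: "l \<le> length (fst d)" if "d \<in> C" for d
    unfolding l_def using that by (intro Least_le) blast
  define S where "S = {d\<in>C. length (fst d) = l}"
  have "\<exists>d\<in>C. length (fst d) = l"
    unfolding l_def by (rule LeastI_ex) (use assms in blast)
  then have "conf_key ` S \<noteq> {}" unfolding S_def by blast
  have "S \<subseteq> {xs. set xs \<subseteq> UNIV \<and> length xs = l} \<times> UNIV" unfolding S_def by auto
  then have "finite S" by (rule finite_subset) (intro finite_cartesian_product finite_lists_length_eq finite)
  then have "Min (conf_key ` S) \<in> conf_key ` S"
    using \<open>conf_key ` S \<noteq> {}\<close> by (simp add: Min_in)
  then obtain c where c: "c \<in> S" "conf_key c = Min (conf_key ` S)" by (metis imageE)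
  have "d = c \<or> conf_less c d" if "d \<in> C" for d
  proof (cases "length (fst d) = l")
    case True
    then have "conf_key c \<le> conf_key d" using c \<open>finite S\<close> that by (simp add: S_def)
    then show ?thesis by (metis conf_key_eq_iff conf_less_iff_key order_le_less)
  next
    case False
    then show ?thesis using l_le[OF that] c(1) by (simp add: S_def conf_less_def)
  qed
  then show ?thesis using c(1) S_def by blast
qed

lemma rep_spec:
  fixes A :: "('q::{finite,linorder}, 'a, 'g::{finite,linorder}) vpa"
  assumes "c \<in> rConf A"
  shows "rep A c \<in> rConf A \<and> lang A (rep A c) = lang A c \<and>
         (\<forall>d\<in>rConf A. lang A d = lang A c \<longrightarrow> d = rep A c \<or> conf_less (rep A c) d)"
proof -
  let ?least = "\<lambda>c'. c' \<in> rConf A \<and> lang A c' = lang A c \<and>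
                  (\<forall>d\<in>rConf A. lang A d = lang A c \<longrightarrow> d = c' \<or> conf_less c' d)"
  have "{d\<in>rConf A. lang A d = lang A c} \<noteq> {}" using assms by blast
  from exists_conf_less_least[OF this] obtain z where z: "?least z" by blast
  show ?thesis unfolding rep_def
  proof (rule theI[of ?least z])
    fix z' assume z': "?least z'"
    then have "z = z' \<or> conf_less z' z" using z by simp
    moreover have "z' = z \<or> conf_less z z'" using z z' by simp
    ultimately show "z' = z" using conf_less_asym by blast
  qed (fact z)
qed

lemma rep_cong: "lang A c = lang A d \<Longrightarrow> rep A c = rep A d"
  unfolding rep_def by simp

lemma rep_in_Rep: "d \<in> rConf A \<Longrightarrow> lang A c = lang A d \<Longrightarrow> rep A c \<in> Rep A"
  unfolding Rep_def using rep_cong by blast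

lemma lang_nuA_DW:
  fixes A :: "('q::{finite,linorder}, 'a, 'g::{finite,linorder}) vpa"
  assumes wf: "wf_vpa A" and u: "u \<in> DW A"
  shows "lang A ([vbot A], snd (nuA A u)) = lang A (delta A (init_conf A) u)"
proof -
  let ?c = "delta A (init_conf A) u"
  have c: "?c \<in> rConf A" by (intro delta_in_rConf init_conf_in_rConf)
  have stack: "fst ?c = [vbot A]" using delta_DW_stack[OF wf u] by (simp add: init_conf_def)
  \<comment> \<open>\<open>rep\<close> cannot lengthen the one-symbol stack, and reachable stacks start with the bottom symbol\<close>
  have "length (fst (rep A ?c)) \<le> 1"
    using rep_spec[OF c] c stack by (auto simp: conf_less_def)
  moreover obtain al where "fst (rep A ?c) = vbot A # al" using rConf_bottom rep_spec[OF c] by blast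
  ultimately have "fst (rep A ?c) = [vbot A]" by simp
  then have "rep A ?c = ([vbot A], snd (rep A ?c))" by (metis prod.collapse)
  then show ?thesis using rep_spec[OF c] unfolding nuA_def by metis
qed

subsection \<open>Simulating input words by flat words\<close>

lemma foldl_tf_step_FQ: "\<forall>x\<in>set y. is_FQ x \<Longrightarrow> foldl (tf_step A) c y = c"
proof (induction y)
  case (Cons x y)
  then show ?case by (cases x) auto
qed simp

lemma tf_FQ_prefix:
  assumes "\<forall>x\<in>set y. is_FQ x" and "z = [] \<or> \<not> is_FQ (hd z)"
  shows "tf A (y @ z) = foldl (tf_step A) (tf_start A y) z"
proof -
  have "dropWhile is_FQ (y @ z) = z"
    using assms by (cases z) (simp_all add: dropWhile_append2)
  moreover have "tf_start A (y @ z) = tf_start A y"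
    using assms by (cases y; cases z) (auto simp: tf_start_def split: fsym.split)
  ultimately show ?thesis by (simp add: tf_def)
qed

lemma concat_hd_not_FQ:
  "\<forall>p\<in>set ps. p \<noteq> [] \<and> \<not> is_FQ (hd p) \<Longrightarrow> concat ps = [] \<or> \<not> is_FQ (hd (concat ps))"
  by (cases ps) auto

definition simulates :: "('q, 'a, 'g) vpa \<Rightarrow> ('a, 'q) fsym list \<Rightarrow> 'a list \<Rightarrow> bool" where
  "simulates A p u \<longleftrightarrow> (\<forall>c. foldl (tf_step A) c p = delta A c u)"

lemma simulatesD: "simulates A p u \<Longrightarrow> foldl (tf_step A) c p = delta A c u"
  unfolding simulates_def by blast

lemma simulates_FC: "simulates A [FC a] [a]"
  by (simp add: simulates_def delta_Cons)

lemma simulates_FT_WM: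
  assumes "wf_vpa A" and "v \<in> WM A" and "\<forall>x\<in>set y. is_FQ x"
  shows "simulates A (FT (phi A v) # y) v"
  using assms by (auto simp: simulates_def foldl_tf_step_FQ delta_WM)

lemma simulates_sigma1: "wf_vpa A \<Longrightarrow> v \<in> WM A \<Longrightarrow> simulates A (sigma1 A v) v"
  unfolding sigma1_def by (rule simulates_FT_WM) auto

lemma simulates_append:
  "simulates A p u \<Longrightarrow> simulates A p' u' \<Longrightarrow> simulates A (p @ p') (u @ u')"
  unfolding simulates_def by (metis foldl_append delta_append)

lemma simulates_concat_map:
  "\<forall>p\<in>set ps. simulates A (f p) (g p) \<Longrightarrow> simulates A (concat (map f ps)) (concat (map g ps))"
  by (induction ps) (auto simp: simulates_append, simp add: simulates_def)

lemma sigma0_FQ: "\<forall>x\<in>set (sigma0 A u). is_FQ x"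
  by (auto simp: sigma0_def)

lemma lang_tf_start_sigma0:
  fixes A :: "('q::{finite,linorder}, 'a, 'g::{finite,linorder}) vpa"
  assumes "wf_vpa A" and "u \<in> DW A"
  shows "lang A (tf_start A (sigma0 A u)) = lang A (delta A (init_conf A) u)"
proof (cases u)
  case Nil
  then show ?thesis by (simp add: sigma0_def tf_start_def init_conf_def)
next
  case (Cons a u')
  then have "tf_start A (sigma0 A u) = ([vbot A], snd (nuA A u))"
    by (simp add: sigma0_def tf_start_def upt_conv_Cons del: upt_Suc)
  then show ?thesis using lang_nuA_DW[OF assms] by simp
qed

lemma sigma0_suffix_of_sigma1:
  assumes "p \<noteq> []"
  shows "\<exists>z. sigma1 A (p @ u) = FT (phi A (p @ u)) # z @ sigma0 A u"
proof -
  have "1 \<le> length p" using assms by (cases p) auto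
  then have "[1..<length (p @ u)] = [1..<length p] @ map (\<lambda>i. i + length p) [0..<length u]"
    using upt_add_eq_append[of 1 "length p" "length u"] by (simp add: map_add_upt add.commute)
  then show ?thesis
    by (intro exI[of _ "map (\<lambda>i. FQ (snd (nuA A (drop i (p @ u))))) [1..<length p]"])
      (simp add: sigma1_def sigma0_def)
qed

theorem Rep_subset_nu_f_Flat:
  fixes A :: "('q::{finite,linorder}, 'a, 'g::{finite,linorder}) vpa"
  assumes wf: "wf_vpa A"
  shows "Rep A \<subseteq> nu_f A ` Flat A"
proof
  fix r assume "r \<in> Rep A"
  then obtain w where r: "r = rep A (delta A (init_conf A) w)" unfolding Rep_def rConf_def by blast
  obtain u0 ps where w: "w = u0 @ concat ps" "u0 \<in> DW A"
    and ps: "\<forall>p\<in>set ps. (\<exists>a\<in>sig_c A. p = [a]) \<or> (p \<in> WM A \<and> p \<noteq> [])"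
    using word_decomposition[OF wf] by blast
  define fl where "fl p = (if \<exists>a\<in>sig_c A. p = [a] then [FC (hd p)] else sigma1 A p)" for p
  have fl: "fl p \<in> {[FC a] | a. a \<in> sig_c A} \<union> S1 A \<and> simulates A (fl p) p \<and>
      fl p \<noteq> [] \<and> \<not> is_FQ (hd (fl p))" if "p \<in> set ps" for p
  proof (cases "\<exists>a\<in>sig_c A. p = [a]")
    case True
    then obtain a where "a \<in> sig_c A" "p = [a]" by blast
    then show ?thesis by (auto simp: fl_def simulates_FC)
  next
    case False
    then have "p \<in> WM A - {[]}" using ps that by auto
    then show ?thesis using False simulates_sigma1[OF wf]
      by (auto simp: fl_def S1_def sigma1_def)
  qed
  define fw where "fw = sigma0 A u0 @ concat (map fl ps)"
  have "set (map fl ps) \<subseteq> {[FC a] | a. a \<in> sig_c A} \<union> S1 A" using fl by auto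
  then have "concat (map fl ps) \<in> kstar ({[FC a] | a. a \<in> sig_c A} \<union> S1 A)"
    unfolding kstar_def by blast
  then have fw: "fw \<in> Flat A"
    using w(2) unfolding fw_def Flat_def conc_def S0_def by blast
  have "simulates A (concat (map fl ps)) (concat ps)"
    using simulates_concat_map[of ps A fl "\<lambda>p. p"] fl by simp
  moreover have "tf A fw = foldl (tf_step A) (tf_start A (sigma0 A u0)) (concat (map fl ps))"
    unfolding fw_def using fl by (intro tf_FQ_prefix sigma0_FQ concat_hd_not_FQ) auto
  ultimately have "tf A fw = delta A (tf_start A (sigma0 A u0)) (concat ps)"
    by (simp add: simulatesD)
  then have "lang A (tf A fw) = lang A (delta A (init_conf A) w)"
    using lang_tf_start_sigma0[OF wf w(2)] by (simp add: w(1) lang_delta delta_append)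
  then show "r \<in> nu_f A ` Flat A"
    unfolding r nu_f_def using fw rep_cong by blast
qed

subsection \<open>Overapproximating the flat languages\<close>

lemma Psi_set_eq_letters:
  assumes "Psi_set K = Psi_set L" and "y \<in> L" and "x \<in> set y"
  shows "\<exists>y'\<in>K. x \<in> set y'"
proof -
  obtain i where "i < length y" "x = y ! i" using assms(3) by (auto simp: in_set_conv_nth)
  then have "(x, length y - i) \<in> Psi_set K" using assms(1,2) by (auto simp: Psi_set_def Psi_def)
  then show ?thesis by (auto simp: Psi_set_def Psi_def) (meson nth_mem)
qed

lemma conc_mono: "K \<subseteq> K' \<Longrightarrow> L \<subseteq> L' \<Longrightarrow> conc K L \<subseteq> conc K' L'"
  unfolding conc_def by blast

lemma kstar_mono: "K \<subseteq> K' \<Longrightarrow> kstar K \<subseteq> kstar K'"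
  unfolding kstar_def by blast

lemma bounded_overapproxD:
  assumes "bounded_overapprox K R"
  shows "K \<subseteq> R" and "length ` K = length ` R" and "Psi_set K = Psi_set R"
  using assms by (simp_all add: bounded_overapprox_def)

context
  fixes A :: "('q::{finite,linorder}, 'a, 'g::{finite,linorder}) vpa"
    and R :: "('q \<Rightarrow> 'q) \<Rightarrow> ('a, 'q) fsym list set"
  assumes wf: "wf_vpa A"
    and quotient_subset_R: "\<And>\<tau>. {x. FT \<tau> # x \<in> S1 A} \<subseteq> R \<tau>"
    and lengths_R: "\<And>\<tau>. length ` {x. FT \<tau> # x \<in> S1 A} = length ` R \<tau>"
    and Psi_set_R: "\<And>\<tau>. Psi_set {x. FT \<tau> # x \<in> S1 A} = Psi_set (R \<tau>)"
begin

lemma letter_of_R: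
  assumes "y \<in> R \<tau>" and "x \<in> set y"
  shows "\<exists>v\<in>WM A. \<exists>i. x = FQ (snd (nuA A (drop i v)))"
proof -
  obtain y' where "FT \<tau> # y' \<in> S1 A" "x \<in> set y'"
    using Psi_set_eq_letters[OF Psi_set_R assms] by blast
  then obtain v where "v \<in> WM A" "FT \<tau> # y' = sigma1 A v" "x \<in> set y'"
    unfolding S1_def by auto
  then show ?thesis by (auto simp: sigma1_def)
qed

lemma R_FQ: "y \<in> R \<tau> \<Longrightarrow> \<forall>x\<in>set y. is_FQ x"
  using letter_of_R by fastforce

lemma R_nonempty_imp_phi:
  assumes "y \<in> R \<tau>"
  shows "\<exists>v\<in>WM A. \<tau> = phi A v"
proof -
  have "length y \<in> length ` {x. FT \<tau> # x \<in> S1 A}" using assms lengths_R by blast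
  then obtain y' where "FT \<tau> # y' \<in> S1 A" by blast
  then show ?thesis unfolding S1_def by (auto simp: sigma1_def)
qed

lemma RegFlat_piece_simulates:
  assumes "p \<in> {[FC a] | a. a \<in> sig_c A} \<union> (\<Union>\<tau>. (\<lambda>x. FT \<tau> # x) ` R \<tau>)"
  shows "p \<noteq> [] \<and> \<not> is_FQ (hd p) \<and> (\<exists>u. simulates A p u)"
  using assms
proof
  assume "p \<in> {[FC a] | a. a \<in> sig_c A}"
  then obtain a where "p = [FC a]" by blast
  then show ?thesis using simulates_FC[of A a] by auto
next
  assume "p \<in> (\<Union>\<tau>. (\<lambda>x. FT \<tau> # x) ` R \<tau>)"
  then obtain \<tau> y where p: "p = FT \<tau> # y" "y \<in> R \<tau>" by blast
  obtain v where "v \<in> WM A" "\<tau> = phi A v" using R_nonempty_imp_phi[OF p(2)] by blast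
  then show ?thesis using p simulates_FT_WM[OF wf _ R_FQ] by auto
qed

lemma lang_tf_start_Suf_R:
  assumes "u @ y \<in> R \<tau>"
  shows "\<exists>d\<in>rConf A. lang A (tf_start A y) = lang A d"
proof (cases y)
  case Nil
  then show ?thesis using init_conf_in_rConf by (auto simp: tf_start_def init_conf_def)
next
  case (Cons x y')
  then obtain v i where v: "v \<in> WM A" "x = FQ (snd (nuA A (drop i v)))"
    using letter_of_R[OF assms, of x] by auto
  then have "lang A (tf_start A y) = lang A (delta A (init_conf A) (drop i v))"
    using Cons lang_nuA_DW[OF wf drop_WM_in_DW[OF v(1)]] by (simp add: tf_start_def)
  then show ?thesis using delta_in_rConf[OF init_conf_in_rConf] by blast
qed

theorem nu_f_RegFlat_subset_Rep: "nu_f A ` RegFlat A R \<subseteq> Rep A"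
proof
  fix r assume "r \<in> nu_f A ` RegFlat A R"
  then obtain y z where r: "r = nu_f A (y @ z)" and "y \<in> (\<Union>\<tau>. Suf (R \<tau>))"
    and "z \<in> kstar ({[FC a] | a. a \<in> sig_c A} \<union> (\<Union>\<tau>. (\<lambda>x. FT \<tau> # x) ` R \<tau>))"
    unfolding RegFlat_def Let_def conc_def by blast
  then obtain \<tau> u ps where y: "u @ y \<in> R \<tau>" and z: "z = concat ps"
    and ps: "set ps \<subseteq> {[FC a] | a. a \<in> sig_c A} \<union> (\<Union>\<tau>. (\<lambda>x. FT \<tau> # x) ` R \<tau>)"
    unfolding Suf_def kstar_def by blast
  have pieces: "p \<noteq> [] \<and> \<not> is_FQ (hd p) \<and> (\<exists>u. simulates A p u)" if "p \<in> set ps" for p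
    using RegFlat_piece_simulates[OF subsetD[OF ps that]] .
  then have "\<forall>p\<in>set ps. \<exists>u. simulates A p u" by blast
  then obtain g where "\<forall>p\<in>set ps. simulates A p (g p)" using bchoice by blast
  then have "simulates A (concat ps) (concat (map g ps))"
    using simulates_concat_map[of ps A "\<lambda>p. p" g] by simp
  moreover have "tf A (y @ concat ps) = foldl (tf_step A) (tf_start A y) (concat ps)"
    using pieces R_FQ[OF y] by (intro tf_FQ_prefix concat_hd_not_FQ) auto
  ultimately have "tf A (y @ concat ps) = delta A (tf_start A y) (concat (map g ps))"
    by (simp add: simulatesD)
  moreover obtain d where d: "d \<in> rConf A" "lang A (tf_start A y) = lang A d"
    using lang_tf_start_Suf_R[OF y] by blast
  ultimately have "lang A (tf A (y @ concat ps)) = lang A (delta A d (concat (map g ps)))"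
    by (simp only: lang_delta)
  then show "r \<in> Rep A"
    unfolding r z nu_f_def by (rule rep_in_Rep[OF delta_in_rConf[OF d(1)]])
qed

lemma S1_subset_R1: "S1 A \<subseteq> (\<Union>\<tau>. (\<lambda>x. FT \<tau> # x) ` R \<tau>)"
proof
  fix s assume s: "s \<in> S1 A"
  then obtain v where "s = sigma1 A v" unfolding S1_def by blast
  then obtain y where y: "s = FT (phi A v) # y" unfolding sigma1_def by blast
  then have "y \<in> R (phi A v)" using s quotient_subset_R by blast
  then show "s \<in> (\<Union>\<tau>. (\<lambda>x. FT \<tau> # x) ` R \<tau>)" using y by blast
qed

lemma S0_subset_R0: "S0 A \<subseteq> (\<Union>\<tau>. Suf (R \<tau>))"
proof
  fix s assume "s \<in> S0 A"
  then obtain u where u: "u \<in> DW A" "s = sigma0 A u" unfolding S0_def by blast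
  obtain a b where a: "a \<in> sig_c A" and b: "b \<in> sig_r A" using wf_vpa_nonempty[OF wf] by blast
  \<comment> \<open>pending calls and the well-matched \<open>[a, b]\<close> turn \<open>u\<close> into a suffix of a nonempty
    well-matched word\<close>
  obtain k where k: "\<forall>y\<in>WM A. replicate k a @ y @ u \<in> WM A"
    using DW_call_prefix_WM[OF a u(1)] by blast
  define v where "v = (replicate k a @ [a, b]) @ u"
  have "v \<in> WM A - {[]}"
    unfolding v_def using k[rule_format, OF wm_nest[OF a wm_eps b]] by simp
  then have "sigma1 A v \<in> S1 A" unfolding S1_def by (rule imageI)
  moreover obtain z where "sigma1 A v = FT (phi A v) # z @ s"
    using sigma0_suffix_of_sigma1[of "replicate k a @ [a, b]"] u(2) unfolding v_def by auto
  ultimately have "z @ s \<in> R (phi A v)" using quotient_subset_R by auto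
  then show "s \<in> (\<Union>\<tau>. Suf (R \<tau>))" unfolding Suf_def by blast
qed

lemma Flat_subset_RegFlat: "Flat A \<subseteq> RegFlat A R"
  unfolding Flat_def RegFlat_def Let_def
  by (intro conc_mono kstar_mono Un_mono subset_refl S0_subset_R0 S1_subset_R1)

end

theorem proposition13:
  fixes A :: "('q::{finite,linorder}, 'a::finite, 'g::{finite,linorder}) vpa"
    and R :: "('q \<Rightarrow> 'q) \<Rightarrow> ('a, 'q) fsym list set"
  assumes "wf_vpa A"
    and "lang A (init_conf A) \<noteq> {}"
    and "lang A (init_conf A) \<noteq> UNIV"
    and "bounded (S0 A)"
    and "\<And>\<tau>. bounded_overapprox {x. FT \<tau> # x \<in> S1 A} (R \<tau>)"
  shows "nu_f A ` Flat A = Rep A \<and> nu_f A ` RegFlat A R = Rep A"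
proof -
  \<comment> \<open>Only the inclusion, length and \<open>\<Psi>\<close> conditions of the overapproximations are needed.\<close>
  note overapprox = assms(1) assms(5)[THEN bounded_overapproxD(1)]
    assms(5)[THEN bounded_overapproxD(2)] assms(5)[THEN bounded_overapproxD(3)]
  have Flat_RegFlat: "nu_f A ` Flat A \<subseteq> nu_f A ` RegFlat A R"
    using Flat_subset_RegFlat[OF overapprox] by (rule image_mono)
  have RegFlat_Rep: "nu_f A ` RegFlat A R \<subseteq> Rep A"
    using nu_f_RegFlat_subset_Rep[OF overapprox] .
  have Rep_Flat: "Rep A \<subseteq> nu_f A ` Flat A"
    using Rep_subset_nu_f_Flat[OF assms(1)] .
  show ?thesis
    using subset_antisym[OF order_trans[OF Flat_RegFlat RegFlat_Rep] Rep_Flat]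
      subset_antisym[OF RegFlat_Rep order_trans[OF Rep_Flat Flat_RegFlat]] by (rule conjI)
qed

end
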